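(* Let $M:D\to E$ be the continuous map where $D=\{x,y,z,c\}$ has open sets $\emptyset,\{x,y,z\},D$, $E=\{u,v\}$ is the two-point antidiscrete space, and $M(x)=M(y)=u$, $M(z)=M(c)=v$. Let $k:\{\bullet\}\to S$ be the map sending the point to the closed point $c$ of the Sierpinski space $S=\{o,c\}$ (open sets $\emptyset,\{o\},S$). Then, in $\mathrm{Top}$, $\{M\}^l=\{k\}^{lr}$, and this is the class of closed subspace embeddings, i.e. of closed injective continuous maps.
   Context: For continuous maps $f:A\to B$, $g:C\to D'$, $f\pitchfork g$ means: for all continuous $t:A\to C$, $b:B\to D'$ with $g\circ t=b\circ f$ there is continuous $d:B\to C$ with $d\circ f=t$, $g\circ d=b$. For a class $P$, $P^l=\{f: f\pitchfork g\ \forall g\in P\}$, $P^r=\{g: f\pitchfork g\ \forall f\in P\}$, and $P^{lr}=(P^l)^r$. *)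

theory Defs
  imports "HOL-Analysis.Analysis"
begin

definition lifts ::
  "'a topology \<Rightarrow> 'b topology \<Rightarrow> ('a \<Rightarrow> 'b) \<Rightarrow>
   'c topology \<Rightarrow> 'd topology \<Rightarrow> ('c \<Rightarrow> 'd) \<Rightarrow> bool" where
  "lifts A B f C D' g \<longleftrightarrow>
     (\<forall>t b. continuous_map A C t \<and> continuous_map B D' b \<and>
            (\<forall>a\<in>topspace A. g (t a) = b (f a)) \<longrightarrow>
        (\<exists>d. continuous_map B C d \<and>
             (\<forall>a\<in>topspace A. d (f a) = t a) \<and>
             (\<forall>y\<in>topspace B. g (d y) = b y)))"

datatype ptD = Dx | Dy | Dz | Dc
datatype ptE = Eu | Ev
datatype ptS = So | Sc

definition D_top :: "ptD topology" where
  "D_top = topology (\<lambda>U. U \<in> {{}, {Dx, Dy, Dz}, UNIV})"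

definition E_top :: "ptE topology" where
  "E_top = topology (\<lambda>U. U \<in> {{}, UNIV})"

definition S_top :: "ptS topology" where
  "S_top = topology (\<lambda>U. U \<in> {{}, {So}, UNIV})"

definition pt_top :: "unit topology" where
  "pt_top = discrete_topology UNIV"

definition M_map :: "ptD \<Rightarrow> ptE" where
  "M_map p = (case p of Dx \<Rightarrow> Eu | Dy \<Rightarrow> Eu | Dz \<Rightarrow> Ev | Dc \<Rightarrow> Ev)"

definition k_map :: "unit \<Rightarrow> ptS" where
  "k_map _ = Sc"

definition closed_embedding_map :: "'a topology \<Rightarrow> 'b topology \<Rightarrow> ('a \<Rightarrow> 'b) \<Rightarrow> bool" where
  "closed_embedding_map X Y g \<longleftrightarrow> embedding_map X Y g \<and> closedin Y (g ` topspace X)"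


lemma istopology_chain3:
  assumes AB: "A \<subseteq> B"
  shows "istopology (\<lambda>U. U \<in> {{}, A, B})"
  unfolding istopology_def
proof (intro conjI allI impI ballI)
  fix S T assume "S \<in> {{}, A, B}" "T \<in> {{}, A, B}"
  then show "S \<inter> T \<in> {{}, A, B}"
    using AB by (elim insertE emptyE) (simp_all add: Int_absorb1 Int_absorb2)
next
  fix K assume K: "\<forall>S\<in>K. S \<in> {{}, A, B}"
  show "\<Union>K \<in> {{}, A, B}"
  proof (cases "B \<in> K")
    case True
    then have "\<Union>K = B" using K AB by blast
    then show ?thesis by simp
  next
    case nB: False
    show ?thesis
    proof (cases "A \<in> K")
      case True
      then have "\<Union>K = A" using K nB AB by blast
      then show ?thesis by simp
    next
      case False
      then have "\<Union>K = {}" using K nB by blast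
      then show ?thesis by simp
    qed
  qed
qed

lemma openin_D_top: "openin D_top U \<longleftrightarrow> U \<in> {{}, {Dx, Dy, Dz}, UNIV}"
proof -
  have "istopology (\<lambda>U. U \<in> {{}, {Dx, Dy, Dz}, (UNIV::ptD set)})" by (rule istopology_chain3) simp
  then show ?thesis unfolding D_top_def by (subst topology_inverse') simp_all
qed

lemma openin_E_top: "openin E_top U \<longleftrightarrow> U \<in> {{}, UNIV}"
proof -
  have "istopology (\<lambda>U. U \<in> {{}, {}, (UNIV::ptE set)})" by (rule istopology_chain3) simp
  then show ?thesis unfolding E_top_def by (subst topology_inverse') simp_all
qed

lemma openin_S_top: "openin S_top U \<longleftrightarrow> U \<in> {{}, {So}, UNIV}"
proof -
  have "istopology (\<lambda>U. U \<in> {{}, {So}, (UNIV::ptS set)})" by (rule istopology_chain3) simp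
  then show ?thesis unfolding S_top_def by (subst topology_inverse') simp_all
qed

end

theory Submission
  imports Defs
begin

text \<open>Continuous maps into \<open>D\<close> correspond to closed sets (preimages of \<open>c\<close>), maps into the
antidiscrete \<open>E\<close> are arbitrary functions, and continuous maps into \<open>S\<close> again correspond to closed
sets (preimages of the closed point).  So lifting \<open>g\<close> against \<open>M\<close> asks to extend a closed subset
of \<open>X\<close> to a closed subset of \<open>Y\<close> along \<open>g\<close>, subject to a two-colouring of \<open>Y\<close>: colouring two
points with the same image differently shows that \<open>g\<close> is injective, and colouring a closed set \<open>U\<close>
by \<open>c\<close> shows that \<open>g ` U\<close> is closed; for closed injective \<open>g\<close> the extension is just the image.
Lifting \<open>f\<close> against \<open>k\<close> says that every closed set containing the image of \<open>f\<close> is everything,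
i.e. \<open>f\<close> has dense image.  A closed embedding lifts against such maps, because the bottom map
sends a dense set into the closed image of \<open>g\<close>, hence everything.  Conversely, lifting the
corestriction of \<open>g\<close> to the closure of its image against \<open>g\<close> itself yields a continuous inverse
on that closure, which is therefore the image of \<open>g\<close>.\<close>

lemma topspace_D_top [simp]: "topspace D_top = UNIV"
  by (metis openin_D_top openin_subset insertCI top.extremum_uniqueI)

lemma topspace_E_top [simp]: "topspace E_top = UNIV"
  by (metis openin_E_top openin_subset insertCI top.extremum_uniqueI)

lemma topspace_S_top [simp]: "topspace S_top = UNIV"
  by (metis openin_S_top openin_subset insertCI top.extremum_uniqueI)

lemma topspace_pt_top [simp]: "topspace pt_top = UNIV"
  by (simp add: pt_top_def)

lemma closedin_D_top: "closedin D_top C \<longleftrightarrow> C \<in> {{}, {Dc}, UNIV}"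
proof -
  have "{Dx, Dy, Dz} = - {Dc}"
    by (rule set_eqI, case_tac x) simp_all
  then have "- C \<in> {{}, {Dx, Dy, Dz}, UNIV} \<longleftrightarrow> C \<in> {{}, {Dc}, UNIV}"
    by (metis Compl_empty_eq Compl_UNIV_eq compl_eq_compl_iff insert_iff singletonD)
  then show ?thesis
    by (simp add: closedin_def openin_D_top Compl_eq_Diff_UNIV)
qed

lemma closedin_S_top: "closedin S_top C \<longleftrightarrow> C \<in> {{}, {Sc}, UNIV}"
proof -
  have "{So} = - {Sc}"
    by (rule set_eqI, case_tac x) simp_all
  then have "- C \<in> {{}, {So}, UNIV} \<longleftrightarrow> C \<in> {{}, {Sc}, UNIV}"
    by (metis Compl_empty_eq Compl_UNIV_eq compl_eq_compl_iff insert_iff singletonD)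
  then show ?thesis
    by (simp add: closedin_def openin_S_top Compl_eq_Diff_UNIV)
qed

lemma continuous_map_into_D_top:
  "continuous_map Y D_top d \<longleftrightarrow> closedin Y {y \<in> topspace Y. d y = Dc}"
  by (auto simp: continuous_map_closedin closedin_D_top)

lemma continuous_map_into_S_top:
  "continuous_map Y S_top b \<longleftrightarrow> closedin Y {y \<in> topspace Y. b y = Sc}"
  by (auto simp: continuous_map_closedin closedin_S_top)

lemma continuous_map_into_E_top: "continuous_map Y E_top b"
  by (simp add: continuous_map_def openin_E_top)

lemma continuous_map_into_pt_top: "continuous_map Y pt_top t"
proof -
  have "t = (\<lambda>_. ())"
    by (simp add: fun_eq_iff)
  then show ?thesis
    by (simp add: pt_top_def)
qed

lemma lifts_k_map_iff_dense_image:
  assumes f: "continuous_map A B f"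
  shows "lifts A B f pt_top S_top k_map \<longleftrightarrow> B closure_of (f ` topspace A) = topspace B"
proof
  assume lifts: "lifts A B f pt_top S_top k_map"
  define C where "C = B closure_of (f ` topspace A)"
  define b where "b y = (if y \<in> C then Sc else So)" for y
  have "{y \<in> topspace B. b y = Sc} = C"
    using closure_of_subset_topspace[of B] by (auto simp: b_def C_def)
  then have "continuous_map B S_top b"
    by (simp add: continuous_map_into_S_top C_def)
  moreover have "\<forall>a\<in>topspace A. k_map () = b (f a)"
    using f closure_of_subset[of "f ` topspace A" B]
    by (auto simp: k_map_def b_def C_def continuous_map_image_subset_topspace)
  ultimately obtain d where "\<forall>y\<in>topspace B. k_map (d y) = b y"
    using lifts[unfolded lifts_def, rule_format, of "\<lambda>_. ()" b] continuous_map_into_pt_top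
    by blast
  then have "y \<in> C" if "y \<in> topspace B" for y
    using that by (cases "y \<in> C") (auto simp: k_map_def b_def)
  then show "B closure_of (f ` topspace A) = topspace B"
    unfolding C_def by (meson closure_of_subset_topspace subsetI subset_antisym)
next
  assume dense: "B closure_of (f ` topspace A) = topspace B"
  show "lifts A B f pt_top S_top k_map"
    unfolding lifts_def
  proof (intro allI impI, elim conjE)
    fix t b
    assume b: "continuous_map B S_top b" and sq: "\<forall>a\<in>topspace A. k_map (t a) = b (f a)"
    have "f ` topspace A \<subseteq> {y \<in> topspace B. b y = Sc}"
      using sq f by (auto simp: k_map_def continuous_map_def)
    then have "topspace B \<subseteq> {y \<in> topspace B. b y = Sc}"
      using b dense closure_of_minimal continuous_map_into_S_top by metis
    then have "\<forall>y\<in>topspace B. k_map () = b y"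
      by (auto simp: k_map_def)
    then show "\<exists>d. continuous_map B pt_top d \<and> (\<forall>a\<in>topspace A. d (f a) = t a) \<and>
                   (\<forall>y\<in>topspace B. k_map (d y) = b y)"
      using continuous_map_into_pt_top by (intro exI[of _ "\<lambda>_. ()"]) simp
  qed
qed

lemma closed_embedding_map_iff:
  "closed_embedding_map X Y g \<longleftrightarrow>
     continuous_map X Y g \<and> closed_map X Y g \<and> inj_on g (topspace X)"
proof
  assume "closed_embedding_map X Y g"
  then have emb: "embedding_map X Y g" and closed: "closedin Y (g ` topspace X)"
    by (auto simp: closed_embedding_map_def)
  then have hom: "homeomorphic_map X (subtopology Y (g ` topspace X)) g"
    by (simp add: embedding_map_def)
  have "continuous_map X Y g"
    using homeomorphic_imp_continuous_map[OF hom] continuous_map_in_subtopology by blast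
  moreover have "closed_map X Y g"
    using emb closed by (rule embedding_imp_closed_map)
  moreover have "inj_on g (topspace X)"
    using hom by (rule homeomorphic_imp_injective_map)
  ultimately show "continuous_map X Y g \<and> closed_map X Y g \<and> inj_on g (topspace X)"
    by blast
next
  assume "continuous_map X Y g \<and> closed_map X Y g \<and> inj_on g (topspace X)"
  then show "closed_embedding_map X Y g"
    by (simp add: closed_embedding_map_def closed_map_def injective_closed_imp_embedding_map)
qed

lemma lifts_M_map_if_closed_injective:
  assumes closed: "closed_map X Y g" and inj: "inj_on g (topspace X)"
  shows "lifts X Y g D_top E_top M_map"
  unfolding lifts_def
proof (intro allI impI, elim conjE)
  fix t b
  assume t: "continuous_map X D_top t" and sq: "\<forall>a\<in>topspace X. M_map (t a) = b (g a)"
  define d where "d y = (if y \<in> g ` topspace X then t (inv_into (topspace X) g y)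
                         else if b y = Eu then Dx else Dz)" for y
  have dg: "d (g a) = t a" if "a \<in> topspace X" for a
    using that inj by (auto simp: d_def)
  have gY: "g ` topspace X \<subseteq> topspace Y"
    using closed closed_map_imp_subset by blast
  have "d y \<noteq> Dc" if "y \<notin> g ` topspace X" for y
    using that by (simp add: d_def)
  then have "{y \<in> topspace Y. d y = Dc} = g ` {a \<in> topspace X. t a = Dc}"
    using gY dg by force
  moreover have "closedin Y (g ` {a \<in> topspace X. t a = Dc})"
    using closed t by (simp add: closed_map_def continuous_map_into_D_top)
  ultimately have "continuous_map Y D_top d"
    by (simp add: continuous_map_into_D_top)
  moreover have "M_map (d y) = b y" for y
  proof (cases "y \<in> g ` topspace X")
    case True
    then show ?thesis
      using sq dg by auto
  next
    case False
    then show ?thesis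
      by (cases "b y") (auto simp: d_def M_map_def)
  qed
  ultimately show "\<exists>d. continuous_map Y D_top d \<and> (\<forall>a\<in>topspace X. d (g a) = t a) \<and>
                       (\<forall>y\<in>topspace Y. M_map (d y) = b y)"
    using dg by blast
qed

lemma inj_on_if_lifts_M_map:
  assumes lifts: "lifts X Y g D_top E_top M_map"
  shows "inj_on g (topspace X)"
proof (rule inj_onI, rule ccontr)
  fix a1 a2
  assume a: "a1 \<in> topspace X" "a2 \<in> topspace X" "g a1 = g a2" "a1 \<noteq> a2"
  define t where "t a = (if a = a1 then Dx else Dy)" for a
  have "continuous_map X D_top t"
    by (simp add: continuous_map_into_D_top t_def)
  moreover have "\<forall>a\<in>topspace X. M_map (t a) = Eu"
    by (simp add: t_def M_map_def)
  ultimately obtain d where "\<forall>a\<in>topspace X. d (g a) = t a"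
    using lifts[unfolded lifts_def, rule_format, of t "\<lambda>_. Eu"] continuous_map_into_E_top
    by blast
  then show False
    using a by (metis t_def ptD.distinct(1))
qed

lemma closed_map_if_lifts_M_map:
  assumes g: "continuous_map X Y g" and lifts: "lifts X Y g D_top E_top M_map"
  shows "closed_map X Y g"
  unfolding closed_map_def
proof (intro allI impI)
  fix U
  assume U: "closedin X U"
  \<comment> \<open>colour \<open>z\<close> outside \<open>U\<close> but over \<open>g ` U\<close> makes the square commute without injectivity\<close>
  define t where "t a = (if a \<in> U then Dc else if g a \<in> g ` U then Dz else Dx)" for a
  define b where "b y = (if y \<in> g ` U then Ev else Eu)" for y
  have "{a \<in> topspace X. t a = Dc} = U"
    using closedin_subset[OF U] by (auto simp: t_def)
  then have "continuous_map X D_top t"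
    using U by (simp add: continuous_map_into_D_top)
  moreover have "\<forall>a\<in>topspace X. M_map (t a) = b (g a)"
    by (simp add: t_def b_def M_map_def)
  ultimately obtain d where d: "continuous_map Y D_top d"
    and dg: "\<forall>a\<in>topspace X. d (g a) = t a" and Md: "\<forall>y\<in>topspace Y. M_map (d y) = b y"
    using lifts[unfolded lifts_def, rule_format, of t b] continuous_map_into_E_top by blast
  have "y \<in> g ` U" if "y \<in> topspace Y" "d y = Dc" for y
    using Md[rule_format, OF that(1)] that(2) by (cases "y \<in> g ` U") (simp_all add: M_map_def b_def)
  moreover have "d (g a) = Dc" if "a \<in> U" for a
    using dg that closedin_subset[OF U] by (auto simp: t_def)
  moreover have "g ` U \<subseteq> topspace Y"
    using g closedin_subset[OF U] continuous_map_image_subset_topspace by blast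
  ultimately have "{y \<in> topspace Y. d y = Dc} = g ` U"
    by blast
  then show "closedin Y (g ` U)"
    using d by (simp add: continuous_map_into_D_top)
qed

lemma lifts_if_dense_image_closed_embedding:
  assumes f: "continuous_map A B f" and dense: "B closure_of (f ` topspace A) = topspace B"
    and g: "closed_embedding_map X Y g"
  shows "lifts A B f X Y g"
  unfolding lifts_def
proof (intro allI impI, elim conjE)
  fix t b
  assume t: "continuous_map A X t" and b: "continuous_map B Y b"
    and sq: "\<forall>a\<in>topspace A. g (t a) = b (f a)"
  define G where "G = g ` topspace X"
  obtain g' where g': "homeomorphic_maps X (subtopology Y G) g g'"
    using g by (auto simp: closed_embedding_map_def embedding_map_def homeomorphic_map_maps G_def)
  have tX: "t a \<in> topspace X" and fB: "f a \<in> topspace B" if "a \<in> topspace A" for a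
    using t f that continuous_map_image_subset_topspace by blast+
  have "f ` topspace A \<subseteq> {y \<in> topspace B. b y \<in> G}"
    using tX fB sq by (force simp: G_def)
  moreover have "closedin B {y \<in> topspace B. b y \<in> G}"
    using g b by (simp add: closed_embedding_map_def continuous_map_closedin G_def)
  ultimately have "topspace B \<subseteq> {y \<in> topspace B. b y \<in> G}"
    using dense closure_of_minimal by metis
  then have "continuous_map B (subtopology Y G) b"
    using b by (auto simp: continuous_map_in_subtopology)
  then have "continuous_map B X (g' \<circ> b)"
    using g' continuous_map_compose homeomorphic_maps_def by blast
  moreover have "g' (b (f a)) = t a" if "a \<in> topspace A" for a
    using g' tX[OF that] sq[rule_format, OF that, symmetric] by (simp add: homeomorphic_maps_def)
  moreover have "g (g' (b y)) = b y" if "y \<in> topspace B" for y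
    using g' \<open>continuous_map B (subtopology Y G) b\<close> that
    by (simp add: homeomorphic_maps_def continuous_map_def Pi_iff)
  ultimately show "\<exists>d. continuous_map B X d \<and> (\<forall>a\<in>topspace A. d (f a) = t a) \<and>
                       (\<forall>y\<in>topspace B. g (d y) = b y)"
    by (intro exI[of _ "g' \<circ> b"]) simp
qed

lemma closed_embedding_map_if_lifts_against_dense_images:
  fixes X :: "'a topology" and Y :: "'b topology"
  assumes g: "continuous_map X Y g"
    and lifts: "\<forall>(A :: 'a topology) (B :: 'b topology) f.
                  continuous_map A B f \<and> B closure_of (f ` topspace A) = topspace B \<longrightarrow>
                  lifts A B f X Y g"
  shows "closed_embedding_map X Y g"
proof -
  define C where "C = Y closure_of (g ` topspace X)"
  define Z where "Z = subtopology Y C"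
  have gX: "g ` topspace X \<subseteq> topspace Y"
    using g continuous_map_image_subset_topspace by blast
  then have gC: "g ` topspace X \<subseteq> C"
    by (simp add: C_def closure_of_subset)
  have Z: "topspace Z = C"
    by (simp add: Z_def C_def closure_of_subset_topspace Int_absorb1)
  have gZ: "continuous_map X Z g"
    using g gC by (simp add: Z_def continuous_map_in_subtopology image_subset_iff_funcset)
  moreover have "Z closure_of (g ` topspace X) = topspace Z"
    unfolding Z using gC closure_of_subtopology_open[of Y C "g ` topspace X"]
    by (simp add: Z_def C_def)
  ultimately have "lifts X Z g X Y g"
    using lifts by blast
  moreover have "continuous_map Z Y id"
    by (simp add: Z_def continuous_map_from_subtopology)
  ultimately obtain d where "continuous_map Z X d"
    and "\<forall>a\<in>topspace X. d (g a) = a" and "\<forall>y\<in>topspace Z. g (d y) = y"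
    using gZ unfolding lifts_def by (metis continuous_map_id id_apply)
  then have "homeomorphic_maps X Z g d"
    using gZ by (simp add: homeomorphic_maps_def)
  then have hom: "homeomorphic_map X Z g"
    using homeomorphic_maps_imp_map by blast
  then have "g ` topspace X = C"
    using Z homeomorphic_imp_surjective_map by blast
  then show ?thesis
    using hom unfolding closed_embedding_map_def embedding_map_def Z_def C_def
    by (metis closedin_closure_of)
qed

theorem mainTheorem6:
  fixes X :: "'a topology" and Y :: "'b topology" and g :: "'a \<Rightarrow> 'b"
  shows
    "continuous_map D_top E_top M_map \<and> continuous_map pt_top S_top k_map \<and>
     (continuous_map X Y g \<longrightarrow>
        (lifts X Y g D_top E_top M_map \<longleftrightarrow> closed_embedding_map X Y g)) \<and>
     (continuous_map X Y g \<and> closed_embedding_map X Y g \<longrightarrow>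
        (\<forall>(A :: 'c topology) (B :: 'e topology) f.
            continuous_map A B f \<and> lifts A B f pt_top S_top k_map \<longrightarrow> lifts A B f X Y g)) \<and>
     (continuous_map X Y g \<and>
      (\<forall>(A :: 'a topology) (B :: 'b topology) f.
          continuous_map A B f \<and> lifts A B f pt_top S_top k_map \<longrightarrow> lifts A B f X Y g)
        \<longrightarrow> closed_embedding_map X Y g) \<and>
     (closed_embedding_map X Y g \<longleftrightarrow>
        continuous_map X Y g \<and> closed_map X Y g \<and> inj_on g (topspace X))"
proof (intro conjI impI)
  show "continuous_map D_top E_top M_map"
    by (rule continuous_map_into_E_top)
  show "continuous_map pt_top S_top k_map"
    by (simp add: k_map_def[abs_def])
  show "closed_embedding_map X Y g \<longleftrightarrow>
          continuous_map X Y g \<and> closed_map X Y g \<and> inj_on g (topspace X)"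
    by (rule closed_embedding_map_iff)
next
  assume "continuous_map X Y g"
  then show "lifts X Y g D_top E_top M_map \<longleftrightarrow> closed_embedding_map X Y g"
    by (auto simp: closed_embedding_map_iff lifts_M_map_if_closed_injective
        intro: inj_on_if_lifts_M_map closed_map_if_lifts_M_map)
next
  assume "continuous_map X Y g \<and> closed_embedding_map X Y g"
  then show "\<forall>(A :: 'c topology) (B :: 'e topology) f.
               continuous_map A B f \<and> lifts A B f pt_top S_top k_map \<longrightarrow> lifts A B f X Y g"
    by (auto simp: lifts_k_map_iff_dense_image intro: lifts_if_dense_image_closed_embedding)
next
  assume "continuous_map X Y g \<and>
    (\<forall>(A :: 'a topology) (B :: 'b topology) f.
        continuous_map A B f \<and> lifts A B f pt_top S_top k_map \<longrightarrow> lifts A B f X Y g)"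
  then show "closed_embedding_map X Y g"
    by (intro closed_embedding_map_if_lifts_against_dense_images)
       (auto simp: lifts_k_map_iff_dense_image)
qed

end
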